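(* Consider Setting A with all nodes running Algorithm 1, and suppose the graph sequence satisfies conditions (C1) and (C3). Then for every sub-state $j$, every $i\in\mathcal V$ and every $k\ge t_{N-1}$, $$\tau^{(j)}_i[k]\le 2(N-1)\,g(k),$$ where $g(k)=f(m(k))$ with $m(k)=\max\{t_q\in\mathbb I:t_q\le k\}$ and $f(t_q)=t_{q+1}-t_q$.
   Context: Setting A. Consider the discrete-time LTI system $x[k+1]=Ax[k]$, $k\in\mathbb N$, with $A\in\mathbb R^{n\times n}$, monitored by $N$ nodes $\mathcal V=\{1,\dots,N\}$; node $i$ measures $y_i[k]=C_ix[k]$ with $C_i\in\mathbb R^{r_i\times n}$. Let $C=[C_1^T\ \cdots\ C_N^T]^T$ and assume $(A,C)$ is observable. Fix an invertible $T$ such that $\bar A=T^{-1}AT$ is block lower-triangular with diagonal blocks $A_{11},\dots,A_{NN}$ and off-diagonal blocks $A_{jq}$ ($q<j$), zero blocks above the diagonal, and $C_iT=[C_{i1}\ \cdots\ C_{ii}\ 0\ \cdots\ 0]$ for each $i$, with $(A_{jj},C_{jj})$ observable for every $j$ (such $T$ exists). With $z[k]=T^{-1}x[k]$ partitioned compatibly into sub-states $z^{(1)}[k],\dots,z^{(N)}[k]$, one has $z^{(j)}[k+1]=A_{jj}z^{(j)}[k]+\sum_{q=1}^{j-1}A_{jq}z^{(q)}[k]$ and $y_j[k]=\sum_{q=1}^{j}C_{jq}z^{(q)}[k]$. Node $j$ is called the source node of sub-state $j$. Communication: at each time $k$ there is a directed graph $\mathcal G[k]=(\mathcal V,\mathcal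 E[k])$; $(l,i)\in\mathcal E[k]$ means $l$ can send to $i$ at time $k$; $\mathcal N_i[k]=\{l\neq i:(l,i)\in\mathcal E[k]\}$. The union graph over $[k_1,k_2]$ has vertex set $\mathcal V$ and edge set $\bigcup_{\tau=k_1}^{k_2}\mathcal E[\tau]$. Algorithm 1 (run for every sub-state $j$ simultaneously). Each node $i$ keeps an estimate $\hat z^{(j)}_i[k]$ (arbitrary initial value) and a freshness index $\tau^{(j)}_i[k]\in\mathbb N\cup\{\omega\}$, where $\omega$ is a special symbol; initially $\tau^{(j)}_j[0]=0$ and $\tau^{(j)}_i[0]=\omega$ for $i\ne j$. Source node $j$: $\tau^{(j)}_j[k]=0$ for all $k$, and $\hat z^{(j)}_j[k+1]=(A_{jj}-L_jC_{jj})\hat z^{(j)}_j[k]+\sum_{q=1}^{j-1}(A_{jq}-L_jC_{jq})\hat z^{(q)}_j[k]+L_jy_j[k]$, where $L_j$ is an observer gain. Non-source node $i\neq j$ at time $k$: let $\mathcal M^{(j)}_i[k]=\{l\in\mathcal N_i[k]:\tau^{(j)}_l[k]\neq\omega\}$; if $\tau^{(j)}_i[k]=\omega$ let $\mathcal F^{(j)}_i[k]=\mathcal M^{(j)}_i[k]$, otherwise $\mathcal F^{(j)}_i[k]=\{l\in\mathcal M^{(j)}_i[k]:\tau^{(j)}_l[k]<\tau^{(j)}_i[k]\}$. If $\mathcal F^{(j)}_i[k]\ne\emptyset$, pick $u\in\arg\min_{l\in\mathcal F^{(j)}_i[k]}\tau^{(j)}_l[k]$ and set $\tau^{(j)}_i[k+1]=\tau^{(j)}_u[k]+1$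 and $\hat z^{(j)}_i[k+1]=A_{jj}\hat z^{(j)}_u[k]+\sum_{q=1}^{j-1}A_{jq}\hat z^{(q)}_i[k]$ ("$i$ adopts the information of $u$ at time $k$"). If $\mathcal F^{(j)}_i[k]=\emptyset$, set $\tau^{(j)}_i[k+1]=\omega$ if $\tau^{(j)}_i[k]=\omega$ and $\tau^{(j)}_i[k+1]=\tau^{(j)}_i[k]+1$ otherwise, and $\hat z^{(j)}_i[k+1]=A_{jj}\hat z^{(j)}_i[k]+\sum_{q=1}^{j-1}A_{jq}\hat z^{(q)}_i[k]$ ("$i$ adopts its own information"). Conditions on the graph sequence: there is an increasing sequence $\mathbb I=\{t_0,t_1,\dots\}\subset\mathbb N$ with $t_0=0$ such that, with $f(t_q)=t_{q+1}-t_q$: (C1) $f(t_q)$ is non-decreasing in $q$; (C3) for each $q$, the union graph over $[t_q,t_{q+1}-1]$ is strongly connected. *)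

theory Defs
  imports Main
begin

text \<open>A time-varying directed graph is a map
  E :: nat \<Rightarrow> (nat \<times> nat) set; (l,i) \<in> E k means l can send to i at time k.
  The freshness index takes values in nat option, where None encodes the symbol omega.\<close>

definition nbrs :: "nat \<Rightarrow> (nat \<Rightarrow> (nat \<times> nat) set) \<Rightarrow> nat \<Rightarrow> nat \<Rightarrow> nat set" where
  "nbrs N E k i = {l \<in> {1..N}. l \<noteq> i \<and> (l, i) \<in> E k}"

text \<open>One step of the freshness-index update of Algorithm 1 at a non-source node i,
  given the indices prev of all nodes at time k. If F is non-empty, i adopts the
  information of some u minimising tau over F, so its new index is tau_u[k]+1.\<close>

definition tau_update :: "nat \<Rightarrow> (nat \<Rightarrow> (nat \<times> nat) set) \<Rightarrow> nat \<Rightarrow> (nat \<Rightarrow> nat option) \<Rightarrow> nat \<Rightarrow> nat option" where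
  "tau_update N E k prev i =
    (let M = {l \<in> nbrs N E k i. prev l \<noteq> None};
         F = (if prev i = None then M else {l \<in> M. the (prev l) < the (prev i)})
     in if F \<noteq> {} then Some (Min ((\<lambda>l. the (prev l)) ` F) + 1)
        else (case prev i of None \<Rightarrow> None | Some v \<Rightarrow> Some (v + 1)))"

primrec tau :: "nat \<Rightarrow> (nat \<Rightarrow> (nat \<times> nat) set) \<Rightarrow> nat \<Rightarrow> nat \<Rightarrow> nat \<Rightarrow> nat option" where
  "tau N E j 0 = (\<lambda>i. if i = j then Some 0 else None)"
| "tau N E j (Suc k) = (\<lambda>i. if i = j then Some 0 else tau_update N E k (tau N E j k) i)"

definition union_strongly_connected :: "nat \<Rightarrow> (nat \<Rightarrow> (nat \<times> nat) set) \<Rightarrow> nat \<Rightarrow> nat \<Rightarrow> bool" where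
  "union_strongly_connected N E k1 k2 =
    (\<forall>a \<in> {1..N}. \<forall>b \<in> {1..N}. (a, b) \<in> (\<Union>s \<in> {k1..k2}. E s)\<^sup>*)"

text \<open>f(t_q) = t_{q+1} - t_q, indexed by q.\<close>

definition fI :: "(nat \<Rightarrow> nat) \<Rightarrow> nat \<Rightarrow> nat" where
  "fI t q = t (Suc q) - t q"

text \<open>m(k) = t_q with q the largest index such that t_q \<le> k; g(k) = f(m(k)).\<close>

definition mIdx :: "(nat \<Rightarrow> nat) \<Rightarrow> nat \<Rightarrow> nat" where
  "mIdx t k = (GREATEST q. t q \<le> k)"

definition gI :: "(nat \<Rightarrow> nat) \<Rightarrow> nat \<Rightarrow> nat" where
  "gI t k = fI t (mIdx t k)"

end

theory Submission
  imports Defs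
begin

text \<open>Call a node reached from j at time k (starting at time s) if a time-respecting path of
  edges leaves j at or after s and arrives there by time k. Along such a path the freshness
  index grows by at most one per step, so a reached node has index at most k - s. Since every
  window [t_q, t_(q+1)) has a strongly connected union graph, each window reaches at least one
  new node, so N - 1 consecutive windows reach all of them. Starting N - 1 windows before
  the one containing k, condition (C1) bounds the elapsed time by N g(k), which is at most
  2 (N - 1) g(k) once N \<ge> 2.\<close>

lemma tau_source [simp]: "tau N E j k j = Some 0"
  by (cases k) auto

lemma tau_update_le:
  assumes prev_l: "prev l = Some v" and l: "l = i \<or> l \<in> nbrs N E k i"
  shows "\<exists>w. tau_update N E k prev i = Some w \<and> w \<le> Suc v"
proof -
  define M where "M = {l \<in> nbrs N E k i. prev l \<noteq> None}"
  define F where "F = (if prev i = None then M else {l \<in> M. the (prev l) < the (prev i)})"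
  have upd: "tau_update N E k prev i = (if F \<noteq> {} then Some (Min ((\<lambda>l. the (prev l)) ` F) + 1)
      else (case prev i of None \<Rightarrow> None | Some v \<Rightarrow> Some (v + 1)))"
    unfolding tau_update_def Let_def F_def M_def by simp
  have "finite F"
    unfolding F_def M_def nbrs_def by (rule finite_subset[of _ "{1..N}"]) auto
  then have Min_le: "Min ((\<lambda>l. the (prev l)) ` F) \<le> the (prev x)" if "x \<in> F" for x
    using that by (intro Min_le) auto
  show ?thesis
  proof (cases "prev i")
    case None
    with l prev_l have "l \<in> F" by (auto simp: F_def M_def)
    with Min_le[of l] prev_l upd show ?thesis by auto
  next
    case (Some u)
    have "l \<in> F \<or> u \<le> v"
      using l prev_l Some by (auto simp: F_def M_def)
    moreover have "the (prev x) < u" if "x \<in> F" for x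
      using that Some by (simp add: F_def)
    ultimately show ?thesis
      using Min_le prev_l upd Some by (cases "F = {}") fastforce+
  qed
qed

inductive reached :: "(nat \<Rightarrow> (nat \<times> nat) set) \<Rightarrow> nat \<Rightarrow> nat \<Rightarrow> nat \<Rightarrow> nat \<Rightarrow> bool"
  for E j s where
  start: "reached E j s s j"
| wait: "reached E j s k x \<Longrightarrow> reached E j s (Suc k) x"
| move: "reached E j s k l \<Longrightarrow> (l, x) \<in> E k \<Longrightarrow> reached E j s (Suc k) x"

lemma reached_start_le: "reached E j s k x \<Longrightarrow> s \<le> k"
  by (induction rule: reached.induct) auto

lemma reached_mono:
  assumes "reached E j s k x" and "k \<le> k'"
  shows "reached E j s k' x"
  using assms(2) by (induction k' rule: dec_induct) (auto intro: reached.wait assms(1))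

lemma reached_source: "s \<le> k \<Longrightarrow> reached E j s k j"
  using reached_mono reached.start by blast

lemma reached_in_nodes:
  assumes edges: "\<And>k. E k \<subseteq> {1..N} \<times> {1..N}" and j: "j \<in> {1..N}"
  shows "reached E j s k x \<Longrightarrow> x \<in> {1..N}"
  by (induction rule: reached.induct) (use j edges in fastforce)+

lemma tau_le_elapsed:
  assumes edges: "\<And>k. E k \<subseteq> {1..N} \<times> {1..N}"
  shows "reached E j s k x \<Longrightarrow> \<exists>w. tau N E j k x = Some w \<and> w \<le> k - s"
proof (induction rule: reached.induct)
  case start
  then show ?case by simp
next
  case (wait k x)
  then obtain w where w: "tau N E j k x = Some w" "w \<le> k - s" by blast
  have "s \<le> k" using wait.hyps reached_start_le by blast
  with w tau_update_le[of "tau N E j k" x w x N E k] show ?case by auto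
next
  case (move k l x)
  then obtain w where w: "tau N E j k l = Some w" "w \<le> k - s" by blast
  have "s \<le> k" using move.hyps reached_start_le by blast
  moreover have "l = x \<or> l \<in> nbrs N E k x"
    using move.hyps edges[of k] by (auto simp: nbrs_def)
  ultimately show ?case
    using w tau_update_le[of "tau N E j k" l w x N E k] by auto
qed

lemma rtrancl_leaves_set:
  "(a, b) \<in> R\<^sup>* \<Longrightarrow> a \<in> A \<Longrightarrow> b \<notin> A \<Longrightarrow> \<exists>u w. (u, w) \<in> R \<and> u \<in> A \<and> w \<notin> A"
  by (induction rule: rtrancl_induct) blast+

text \<open>No assumption a \<le> b is needed: over an empty window the union graph has no edges, so
  strong connectivity would force every node to be j itself.\<close>

lemma reached_spreads:
  assumes conn: "union_strongly_connected N E a b" and j: "j \<in> {1..N}" and "s \<le> a"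
    and y: "y \<in> {1..N}" "\<not> reached E j s a y"
  shows "\<exists>w. \<not> reached E j s a w \<and> reached E j s (Suc b) w"
proof -
  let ?R = "\<Union>k \<in> {a..b}. E k"
  have "(j, y) \<in> ?R\<^sup>*"
    using conn j y unfolding union_strongly_connected_def by blast
  moreover have "reached E j s a j" using reached_source \<open>s \<le> a\<close> by blast
  ultimately obtain u w where uw: "(u, w) \<in> ?R" "reached E j s a u" "\<not> reached E j s a w"
    using rtrancl_leaves_set[of j y ?R "Collect (reached E j s a)"] y(2) by auto
  then obtain k where k: "k \<in> {a..b}" "(u, w) \<in> E k" by blast
  have "reached E j s k u" using uw(2) k(1) reached_mono by auto
  then have "reached E j s (Suc k) w" using k(2) by (rule reached.move)
  with k(1) have "reached E j s (Suc b) w" using reached_mono by auto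
  with uw(3) show ?thesis by blast
qed

context
  fixes N :: nat and E :: "nat \<Rightarrow> (nat \<times> nat) set" and t :: "nat \<Rightarrow> nat" and j :: nat
  assumes edges: "\<And>k. E k \<subseteq> {1..N} \<times> {1..N}"
    and j: "j \<in> {1..N}"
    and t_incr: "strict_mono t"
    and windows_connected: "\<And>q. union_strongly_connected N E (t q) (t (Suc q) - 1)"
begin

lemma card_reached_after_windows:
  "min N (Suc n) \<le> card (Collect (reached E j (t p) (t (p + n))))"
proof (induction n)
  case 0
  have "Collect (reached E j (t p) (t p)) \<subseteq> {1..N}"
    using reached_in_nodes[where E=E, OF edges j] by blast
  then have "finite (Collect (reached E j (t p) (t p)))" by (rule finite_subset) simp
  moreover have "j \<in> Collect (reached E j (t p) (t p))" using reached.start by simp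
  ultimately have "0 < card (Collect (reached E j (t p) (t p)))" by (auto simp: card_gt_0_iff)
  then show ?case by simp
next
  case (Suc n)
  let ?S = "Collect (reached E j (t p) (t (p + n)))"
  let ?T = "Collect (reached E j (t p) (t (p + Suc n)))"
  have T_nodes: "?T \<subseteq> {1..N}" using reached_in_nodes[where E=E, OF edges j] by blast
  then have T_finite: "finite ?T" by (rule finite_subset) simp
  have t_step: "t (p + n) < t (p + Suc n)" using t_incr by (simp add: strict_mono_def)
  then have S_T: "?S \<subseteq> ?T"
    using reached_mono[of E j "t p" "t (p + n)" _ "t (p + Suc n)"] by auto
  show ?case
  proof (cases "{1..N} \<subseteq> ?S")
    case True
    with S_T T_nodes have "?T = {1..N}" by blast
    then show ?thesis by simp
  next
    case False
    then obtain y where "y \<in> {1..N}" "\<not> reached E j (t p) (t (p + n)) y" by blast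
    moreover have "t p \<le> t (p + n)" using t_incr by (simp add: strict_mono_less_eq)
    ultimately obtain w where w: "w \<notin> ?S" "reached E j (t p) (Suc (t (Suc (p + n)) - 1)) w"
      using reached_spreads[OF windows_connected j] by blast
    have "Suc (t (Suc (p + n)) - 1) = t (p + Suc n)" using t_step by simp
    with w S_T have "insert w ?S \<subseteq> ?T" by auto
    then have "card (insert w ?S) \<le> card ?T" using T_finite by (rule card_mono[rotated])
    moreover have "card (insert w ?S) = Suc (card ?S)"
      using w(1) finite_subset[OF S_T T_finite] by simp
    ultimately show ?thesis using Suc.IH by simp
  qed
qed

lemma reached_after_N_minus_1_windows:
  assumes i: "i \<in> {1..N}"
  shows "reached E j (t p) (t (p + (N - 1))) i"
proof -
  let ?S = "Collect (reached E j (t p) (t (p + (N - 1))))"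
  have S_nodes: "?S \<subseteq> {1..N}" using reached_in_nodes[where E=E, OF edges j] by blast
  have "card {1..N} \<le> card ?S"
    using card_reached_after_windows[of "N - 1" p] j by simp
  with S_nodes have "?S = {1..N}" by (intro card_seteq) simp_all
  with i show ?thesis by blast
qed

end

lemma window_sum_le:
  assumes "mono t" and C1: "\<And>q. fI t q \<le> fI t (Suc q)" and "p + n \<le> Suc q"
  shows "t (p + n) \<le> t p + n * fI t q"
  using assms(3)
proof (induction n)
  case 0
  then show ?case by simp
next
  case (Suc n)
  have "fI t (p + n) \<le> fI t q"
    using lift_Suc_mono_le[of "fI t", OF C1] Suc.prems by simp
  moreover have "t (Suc (p + n)) = t (p + n) + fI t (p + n)"
    using \<open>mono t\<close> by (simp add: fI_def mono_def)
  ultimately show ?case using Suc by simp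
qed

lemma mIdx_bounds:
  assumes t_incr: "strict_mono t" and t0: "t 0 = 0"
  shows "t (mIdx t k) \<le> k" and "k < t (Suc (mIdx t k))"
    and "t q \<le> k \<Longrightarrow> q \<le> mIdx t k"
proof -
  have bounded: "y \<le> k" if "t y \<le> k" for y
    using strict_mono_imp_increasing[OF t_incr, of y] that by linarith
  show "t (mIdx t k) \<le> k"
    unfolding mIdx_def by (rule GreatestI_nat[of _ 0 k]) (use t0 bounded in auto)
  show le_mIdx: "q \<le> mIdx t k" if "t q \<le> k" for q
    unfolding mIdx_def by (rule Greatest_le_nat[of _ q k]) (use that bounded in auto)
  show "k < t (Suc (mIdx t k))"
    using le_mIdx[of "Suc (mIdx t k)"] by fastforce
qed

lemma tau_le_N_times_gI:
  assumes edges: "\<And>k. E k \<subseteq> {1..N} \<times> {1..N}"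
    and t_incr: "strict_mono t" and t0: "t 0 = 0"
    and C1: "\<And>q. fI t q \<le> fI t (Suc q)"
    and C3: "\<And>q. union_strongly_connected N E (t q) (t (Suc q) - 1)"
    and j: "j \<in> {1..N}" and i: "i \<in> {1..N}" and k: "t (N - 1) \<le> k"
  shows "\<exists>w. tau N E j k i = Some w \<and> w \<le> N * gI t k"
proof -
  define q where "q = mIdx t k"
  define p where "p = q - (N - 1)"
  have p_q: "p + (N - 1) = q" "p + N = Suc q"
    using mIdx_bounds(3)[OF t_incr t0 k] j by (auto simp: p_def q_def)
  have "reached E j (t p) (t q) i"
    using reached_after_N_minus_1_windows[where E=E, OF edges j t_incr C3 i] p_q by metis
  then have "reached E j (t p) k i"
    using reached_mono mIdx_bounds(1)[OF t_incr t0] by (auto simp: q_def)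
  then obtain w where w: "tau N E j k i = Some w" "w \<le> k - t p"
    using tau_le_elapsed[where E=E, OF edges] by blast
  have "k < t (p + N)" using mIdx_bounds(2)[OF t_incr t0] p_q by (simp add: q_def)
  also have "\<dots> \<le> t p + N * fI t q"
    using window_sum_le[OF strict_mono_mono[OF t_incr] C1, of p N q] p_q(2) by simp
  finally have "w \<le> N * gI t k" using w by (simp add: gI_def q_def)
  with w show ?thesis by blast
qed

theorem mainTheorem7:
  fixes N :: nat and E :: "nat \<Rightarrow> (nat \<times> nat) set" and t :: "nat \<Rightarrow> nat"
  assumes edges: "\<And>k. E k \<subseteq> {1..N} \<times> {1..N}"
    and t_incr: "strict_mono t"
    and t0: "t 0 = 0"
    and C1: "\<And>q. fI t q \<le> fI t (Suc q)"
    and C3: "\<And>q. union_strongly_connected N E (t q) (t (Suc q) - 1)"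
  shows "\<forall>j \<in> {1..N}. \<forall>i \<in> {1..N}. \<forall>k \<ge> t (N - 1).
           \<exists>v. tau N E j k i = Some v \<and> v \<le> 2 * (N - 1) * gI t k"
proof (intro ballI allI impI)
  fix j i k assume j: "j \<in> {1..N}" and i: "i \<in> {1..N}" and k: "k \<ge> t (N - 1)"
  show "\<exists>v. tau N E j k i = Some v \<and> v \<le> 2 * (N - 1) * gI t k"
  proof (cases "N \<ge> 2")
    case True
    then have "N * gI t k \<le> 2 * (N - 1) * gI t k" by (intro mult_right_mono) auto
    with tau_le_N_times_gI[where E=E, OF edges t_incr t0 C1 C3 j i k] show ?thesis
      using le_trans by blast
  next
    case False
    with i j have "i = j" by auto
    then show ?thesis by simp
  qed
qed

end
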